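(* Let $L\geq 1$ be an integer, $P\geq 0$, and $p_B\in[0,1]$. Let $\beta_1,\ldots,\beta_L$ be i.i.d. with $\mathbb{P}(\beta_l=0)=p_B$, $\mathbb{P}(\beta_l=1)=1-p_B$, and $\theta_1,\ldots,\theta_L$ i.i.d. $\mathrm{Uniform}(0,2\pi)$ independent of the $\beta_l$. Set $\mathbf{h}=[\beta_1e^{j\theta_1},\ldots,\beta_Le^{j\theta_L}]^{\mathsf T}$ and $\alpha=\sum_{l=1}^L\beta_l$. Then $$\sup\Big\{\mathbb{E}\big[\log(1+\mathbf{h}^{\mathsf H}\mathbf{Q}\mathbf{h})\big]\;:\;\mathbf{Q}\in\mathbb{C}^{L\times L}\text{ Hermitian positive semidefinite},\ [\mathbf{Q}]_{l,l}\leq P\ \forall l\Big\}=\mathbb{E}[\log(1+\alpha P)],$$ i.e. the ergodic capacity without channel state information at the transmitters equals the one with knowledge of the blockage state $\boldsymbol{\beta}$ at the transmitters.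
   Context: The supremum is over input covariance matrices that do not depend on the channel state (no transmitter channel state information). $\log$ is the logarithm in a fixed base; $\alpha\sim\mathrm{Binomial}(L,1-p_B)$ is the number of non-blocked transmitters. *)

theory Defs
  imports "HOL-Probability.Probability"
begin

text \<open>The sample space is one pair (beta_l, theta_l) per transmitter l,
  indexed by a finite type 'n with L = CARD('n). beta_l is encoded as a bool
  (True means beta_l = 1, which has probability 1 - pB); theta_l is uniform on [0, 2 pi].\<close>

definition chan_space :: "real \<Rightarrow> ('n::finite \<Rightarrow> bool \<times> real) measure" where
  "chan_space pB = PiM UNIV (\<lambda>_. measure_pmf (bernoulli_pmf (1 - pB))
                                  \<Otimes>\<^sub>M uniform_measure lborel {0..2*pi})"

definition beta :: "('n::finite \<Rightarrow> bool \<times> real) \<Rightarrow> 'n \<Rightarrow> real" where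
  "beta \<omega> l = (if fst (\<omega> l) then 1 else 0)"

definition chan :: "('n::finite \<Rightarrow> bool \<times> real) \<Rightarrow> complex^'n" where
  "chan \<omega> = (\<chi> l. complex_of_real (beta \<omega> l) * cis (snd (\<omega> l)))"

definition num_unblocked :: "('n::finite \<Rightarrow> bool \<times> real) \<Rightarrow> real" where
  "num_unblocked \<omega> = (\<Sum>l\<in>UNIV. beta \<omega> l)"

definition herm_form :: "complex^'n^'n \<Rightarrow> complex^'n \<Rightarrow> complex" where
  "herm_form Q x = (\<Sum>i\<in>UNIV. \<Sum>j\<in>UNIV. cnj (x $ i) * (Q $ i $ j) * x $ j)"

definition hermitian :: "complex^'n^'n \<Rightarrow> bool" where
  "hermitian Q \<longleftrightarrow> (\<forall>i j. Q $ i $ j = cnj (Q $ j $ i))"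

definition herm_psd :: "complex^'n^'n \<Rightarrow> bool" where
  "herm_psd Q \<longleftrightarrow> hermitian Q \<and> (\<forall>x. 0 \<le> Re (herm_form Q x))"

end

theory Submission
  imports Defs
begin

(* For an admissible Q write X = h^H Q h >= 0 and Y = alpha P. By concavity of the
   logarithm, ln (1 + X) <= ln (1 + Y) + (1 + X)/(1 + Y) - 1, so it suffices that
   E[(1 + X)/(1 + Y)] <= 1, i.e. E[X/(1 + Y)] <= E[Y/(1 + Y)]. Expand X = sum_ij conj(h_i) Q_ij h_j.
   For i ~= j the phase factor cis theta_j is uniform on the circle and independent of everything else
   in the term (alpha only depends on the blockages), so the cross terms average to zero. The
   diagonal terms are Q_ii beta_i/(1 + Y) with Re Q_ii <= P, and they add up to at most Y/(1 + Y).
   Attainment: Q = P I is admissible and gives X = alpha P. *)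

lemma has_vector_derivative_cis: "(cis has_vector_derivative \<i> * cis t) (at t within S)"
  using has_derivative_cis[OF has_derivative_ident, of t S] by (simp add: has_vector_derivative_def)

lemma borel_measurable_cis[measurable]: "cis \<in> borel_measurable borel"
  by (intro borel_measurable_continuous_onI continuous_intros)

lemma borel_measurable_cnj[measurable (raw)]:
  "f \<in> borel_measurable M \<Longrightarrow> (\<lambda>x. cnj (f x)) \<in> borel_measurable M"
  by (rule measurable_compose[OF _ borel_measurable_continuous_onI]) (auto intro: continuous_intros)

lemma norm_divide_of_real_le:
  fixes z :: "'a::real_normed_field"
  assumes "1 \<le> d"
  shows "norm (z / of_real d) \<le> norm z"
proof -
  have "norm z \<le> norm z * d"
    using assms by (simp add: mult_le_cancel_left1)
  then show ?thesis
    using assms by (simp add: norm_divide divide_le_eq)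
qed

lemma integral_uniform_measure_Icc:
  fixes f :: "real \<Rightarrow> 'a::{banach, second_countable_topology}"
  assumes "a < b" and [measurable]: "f \<in> borel_measurable borel"
  shows "(\<integral>x. f x \<partial>uniform_measure lborel {a..b})
       = (1 / (b - a)) *\<^sub>R (\<integral>x. indicator {a..b} x *\<^sub>R f x \<partial>lborel)"
proof -
  have "1 / ennreal (b - a) = ennreal (1 / (b - a))"
    using divide_ennreal[of 1 "b - a"] \<open>a < b\<close> by simp
  then have "uniform_measure lborel {a..b} = density lborel (\<lambda>x. ennreal (indicator {a..b} x / (b - a)))"
    unfolding uniform_measure_def using \<open>a < b\<close>
    by (intro density_cong) (auto split: split_indicator)
  then have "(\<integral>x. f x \<partial>uniform_measure lborel {a..b})
      = (\<integral>x. (indicator {a..b} x / (b - a)) *\<^sub>R f x \<partial>lborel)"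
    using \<open>a < b\<close> by (simp add: integral_density)
  also have "\<dots> = (1 / (b - a)) *\<^sub>R (\<integral>x. indicator {a..b} x *\<^sub>R f x \<partial>lborel)"
    by (simp add: integral_scaleR_right[symmetric])
  finally show ?thesis .
qed

lemma integral_cis_uniform: "(\<integral>\<theta>. cis \<theta> \<partial>uniform_measure lborel {0..2*pi}) = 0"
proof -
  have "(\<integral>\<theta>. indicator {0..2*pi} \<theta> *\<^sub>R cis \<theta> \<partial>lborel) = - \<i> * cis (2*pi) - - \<i> * cis 0"
    by (intro integral_FTC_atLeastAtMost)
      (auto intro!: derivative_eq_intros has_vector_derivative_cis continuous_intros)
  then show ?thesis
    by (simp add: integral_uniform_measure_Icc)
qed

lemma integral_pair_uniform_phase:
  fixes G :: "'a \<Rightarrow> complex"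
  assumes "prob_space N" and [measurable]: "G \<in> borel_measurable N" and "\<And>a. norm (G a) \<le> B"
  shows "(\<integral>y. G (fst y) * cis (snd y) \<partial>(N \<Otimes>\<^sub>M uniform_measure lborel {0..2*pi})) = 0"
proof -
  interpret U: prob_space "uniform_measure lborel {0..2*pi}"
    by (intro prob_space_uniform_measure) auto
  interpret NU: pair_prob_space N "uniform_measure lborel {0..2*pi}"
    by (simp add: pair_prob_space_def pair_sigma_finite_def prob_space_imp_sigma_finite
        \<open>prob_space N\<close> U.prob_space_axioms)
  have "integrable (N \<Otimes>\<^sub>M uniform_measure lborel {0..2*pi}) (\<lambda>y. G (fst y) * cis (snd y))"
    using assms(3) by (intro NU.integrable_const_bound[where B=B]) (auto simp: norm_mult)
  then have "(\<integral>y. G (fst y) * cis (snd y) \<partial>(N \<Otimes>\<^sub>M uniform_measure lborel {0..2*pi}))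
      = (\<integral>a. G a * (\<integral>\<theta>. cis \<theta> \<partial>uniform_measure lborel {0..2*pi}) \<partial>N)"
    by (simp add: NU.integral_fst'[symmetric])
  then show ?thesis
    by (simp add: integral_cis_uniform)
qed

lemma (in finite_measure) integrable_log_one_plus:
  fixes Z :: "'a \<Rightarrow> real"
  assumes "1 < b" and [measurable]: "Z \<in> borel_measurable M"
    and "\<And>x. x \<in> space M \<Longrightarrow> 0 \<le> Z x" and "\<And>x. x \<in> space M \<Longrightarrow> Z x \<le> K"
  shows "integrable M (\<lambda>x. log b (1 + Z x))"
proof (rule integrable_const_bound[where B="log b (1 + K)"])
  have "norm (log b (1 + Z x)) \<le> log b (1 + K)" if "x \<in> space M" for x
  proof -
    have "0 \<le> log b (1 + Z x)"
      using assms(3)[OF that] \<open>1 < b\<close> by simp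
    moreover have "log b (1 + Z x) \<le> log b (1 + K)"
      using assms(3,4)[OF that] \<open>1 < b\<close> by simp
    ultimately show ?thesis
      by simp
  qed
  then show "AE x in M. norm (log b (1 + Z x)) \<le> log b (1 + K)"
    by (intro AE_I2)
qed measurable

lemma (in finite_measure) integrable_divide_one_plus:
  fixes Z W :: "'a \<Rightarrow> real"
  assumes [measurable]: "Z \<in> borel_measurable M" "W \<in> borel_measurable M"
    and "\<And>x. x \<in> space M \<Longrightarrow> 0 \<le> Z x" and "\<And>x. x \<in> space M \<Longrightarrow> Z x \<le> K"
    and "\<And>x. x \<in> space M \<Longrightarrow> 0 \<le> W x"
  shows "integrable M (\<lambda>x. Z x / (1 + W x))"
proof (rule integrable_const_bound[where B=K])
  have "norm (Z x / (1 + W x)) \<le> K" if "x \<in> space M" for x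
  proof -
    have "Z x / (1 + W x) \<le> Z x / 1"
      using assms(3,5)[OF that] by (intro frac_le) auto
    moreover have "0 \<le> Z x / (1 + W x)"
      using assms(3,5)[OF that] by simp
    ultimately show ?thesis
      using assms(4)[OF that] unfolding real_norm_def by linarith
  qed
  then show "AE x in M. norm (Z x / (1 + W x)) \<le> K"
    by (intro AE_I2)
qed measurable

lemma (in prob_space) integral_log_le_of_integral_divide_le_1:
  fixes U V :: "'a \<Rightarrow> real"
  assumes "1 < b"
    and U_pos: "\<And>x. x \<in> space M \<Longrightarrow> 0 < U x" and V_pos: "\<And>x. x \<in> space M \<Longrightarrow> 0 < V x"
    and integrable: "integrable M (\<lambda>x. log b (U x))" "integrable M (\<lambda>x. log b (V x))"
      "integrable M (\<lambda>x. U x / V x)"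
    and ratio: "(\<integral>x. U x / V x \<partial>M) \<le> 1"
  shows "(\<integral>x. log b (U x) \<partial>M) \<le> (\<integral>x. log b (V x) \<partial>M)"
proof -
  have "0 < ln b"
    using \<open>1 < b\<close> by simp
  have tangent: "log b (U x) \<le> log b (V x) + (U x / V x - 1) / ln b" if "x \<in> space M" for x
  proof -
    have "ln (U x) - ln (V x) = ln (U x / V x)"
      using U_pos[OF that] V_pos[OF that] by (simp add: ln_div)
    also have "\<dots> \<le> U x / V x - 1"
      using U_pos[OF that] V_pos[OF that] by (intro ln_le_minus_one) simp
    finally show ?thesis
      using \<open>0 < ln b\<close>
      by (simp add: log_def divide_right_mono add_divide_distrib[symmetric] diff_divide_distrib[symmetric])
  qed
  have "(\<integral>x. log b (U x) \<partial>M) \<le> (\<integral>x. log b (V x) + (U x / V x - 1) / ln b \<partial>M)"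
    using integrable tangent by (intro integral_mono) auto
  also have "\<dots> = (\<integral>x. log b (V x) \<partial>M) + ((\<integral>x. U x / V x \<partial>M) - 1) / ln b"
    using integrable by (simp add: prob_space)
  also have "\<dots> \<le> (\<integral>x. log b (V x) \<partial>M)"
    using ratio \<open>0 < ln b\<close> by (simp add: divide_nonpos_pos)
  finally show ?thesis .
qed

lemma mat_nth_diagonal: "mat c $ i $ i = c"
  by (simp add: mat_def)

lemma herm_form_mat: "herm_form (mat c) x = c * (\<Sum>i\<in>UNIV. cnj (x $ i) * x $ i)"
proof -
  have "(\<Sum>j\<in>UNIV. cnj (x $ i) * mat c $ i $ j * x $ j)
      = (\<Sum>j\<in>UNIV. if j = i then c * (cnj (x $ i) * x $ i) else 0)" for i
    by (intro sum.cong) (auto simp: mat_def)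
  then show ?thesis
    by (simp add: herm_form_def sum_distrib_left)
qed

lemma herm_psd_mat: "0 \<le> c \<Longrightarrow> herm_psd (mat (of_real c) :: complex^'n::finite^'n)"
  unfolding herm_psd_def hermitian_def herm_form_mat by (simp add: mat_def Re_sum sum_nonneg)

lemma prob_space_chan_space: "prob_space (chan_space pB :: ('n::finite \<Rightarrow> bool \<times> real) measure)"
  unfolding chan_space_def
  by (intro prob_space_PiM prob_space_pair prob_space_measure_pmf prob_space_uniform_measure) auto

lemma integrable_chan_space_bounded:
  fixes f :: "('n::finite \<Rightarrow> bool \<times> real) \<Rightarrow> 'b::{banach, second_countable_topology}"
  assumes "f \<in> borel_measurable (chan_space pB)" and "\<And>w. norm (f w) \<le> B"
  shows "integrable (chan_space pB) f"
proof -
  interpret prob_space "chan_space pB :: ('n \<Rightarrow> bool \<times> real) measure"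
    by (rule prob_space_chan_space)
  show ?thesis
    using assms by (intro integrable_const_bound[where B=B]) auto
qed

lemma borel_measurable_beta[measurable]:
  "(\<lambda>w. beta w l) \<in> borel_measurable (chan_space pB :: ('n::finite \<Rightarrow> bool \<times> real) measure)"
  unfolding chan_space_def beta_def by measurable

lemma borel_measurable_phase[measurable]:
  "(\<lambda>w. snd (w l)) \<in> borel_measurable (chan_space pB :: ('n::finite \<Rightarrow> bool \<times> real) measure)"
  unfolding chan_space_def by measurable

lemma borel_measurable_chan[measurable]:
  "(\<lambda>w. chan w $ l) \<in> borel_measurable (chan_space pB :: ('n::finite \<Rightarrow> bool \<times> real) measure)"
  unfolding chan_def by simp

lemma borel_measurable_num_unblocked[measurable]:
  "num_unblocked \<in> borel_measurable (chan_space pB :: ('n::finite \<Rightarrow> bool \<times> real) measure)"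
  unfolding num_unblocked_def by measurable

lemma borel_measurable_herm_form_chan[measurable]:
  "(\<lambda>w. herm_form Q (chan w)) \<in> borel_measurable (chan_space pB :: ('n::finite \<Rightarrow> bool \<times> real) measure)"
  unfolding herm_form_def by measurable

lemma integral_chan_space_phase:
  fixes F :: "('n::finite \<Rightarrow> bool \<times> real) \<Rightarrow> complex"
  assumes [measurable]: "F \<in> borel_measurable (chan_space pB)" and "\<And>w. norm (F w) \<le> B"
    and phase_invariant: "\<And>w t. F (w(j := (fst (w j), t))) = F w"
  shows "(\<integral>w. F w * cis (snd (w j)) \<partial>chan_space pB) = 0"
proof -
  define M where "M = measure_pmf (bernoulli_pmf (1 - pB)) \<Otimes>\<^sub>M uniform_measure lborel {0..2*pi}"
  have "prob_space M"
    unfolding M_def by (intro prob_space_pair prob_space_measure_pmf prob_space_uniform_measure) auto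
  then interpret product_prob_space "\<lambda>_. M" UNIV
    by (simp add: product_prob_space_def product_sigma_finite_def product_prob_space_axioms_def
        prob_space_imp_sigma_finite)
  have space: "chan_space pB = PiM (insert j (UNIV - {j})) (\<lambda>_. M)"
    by (simp add: chan_space_def M_def insert_absorb)
  have inner: "(\<integral>y. F (x(j := y)) * cis (snd y) \<partial>M) = 0" for x
  proof -
    have "(\<integral>y. F (x(j := y)) * cis (snd y) \<partial>M)
        = (\<integral>y. F (x(j := (fst y, 0))) * cis (snd y) \<partial>M)"
      using phase_invariant[of "x(j := _)" 0] by simp
    also have "\<dots> = 0"
      unfolding M_def
      by (rule integral_pair_uniform_phase[OF prob_space_measure_pmf]) (use assms(2) in auto)
    finally show ?thesis .
  qed
  have "integrable (chan_space pB) (\<lambda>w. F w * cis (snd (w j)))"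
    using assms(2) by (intro integrable_chan_space_bounded[where B=B]) (auto simp: norm_mult)
  then have "(\<integral>w. F w * cis (snd (w j)) \<partial>chan_space pB)
      = (\<integral>x. (\<integral>y. F (x(j := y)) * cis (snd y) \<partial>M) \<partial>PiM (UNIV - {j}) (\<lambda>_. M))"
    using product_integral_insert[of "UNIV - {j}" j "\<lambda>w. F w * cis (snd (w j))"]
    by (simp add: space)
  then show ?thesis
    by (simp add: inner)
qed

lemma chan_nth: "chan w $ l = of_real (beta w l) * cis (snd (w l))"
  by (simp add: chan_def)

lemma beta_nonneg: "0 \<le> beta w l" and beta_le_1: "beta w l \<le> 1"
  by (simp_all add: beta_def)

lemma num_unblocked_mult_nonneg: "0 \<le> P \<Longrightarrow> 0 \<le> num_unblocked w * P"
  unfolding num_unblocked_def by (intro mult_nonneg_nonneg sum_nonneg beta_nonneg)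

lemma num_unblocked_le_card: "num_unblocked w \<le> real CARD('n)"
  for w :: "'n::finite \<Rightarrow> bool \<times> real"
  using sum_bounded_above[of UNIV "beta w" 1] by (simp add: num_unblocked_def beta_le_1)

lemma num_unblocked_mult_le: "0 \<le> P \<Longrightarrow> num_unblocked w * P \<le> real CARD('n) * P"
  for w :: "'n::finite \<Rightarrow> bool \<times> real"
  by (intro mult_right_mono num_unblocked_le_card)

lemma norm_chan_le_1: "norm (chan w $ l) \<le> 1"
  by (simp add: chan_nth norm_mult beta_def)

lemma cnj_chan_mult_chan: "cnj (chan w $ l) * chan w $ l = of_real (beta w l)"
  by (simp add: chan_nth beta_def cis_cnj cis_mult)

lemma beta_phase_update: "beta (w(j := (fst (w j), t))) l = beta w l"
  by (simp add: beta_def)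

lemma num_unblocked_phase_update: "num_unblocked (w(j := (fst (w j), t))) = num_unblocked w"
  by (simp add: num_unblocked_def beta_phase_update)

lemma chan_phase_update: "i \<noteq> j \<Longrightarrow> chan (w(j := (fst (w j), t))) $ i = chan w $ i"
  by (simp add: chan_nth beta_phase_update)

lemma norm_chan_term_le: "norm (cnj (chan w $ i) * c * chan w $ j) \<le> norm c"
proof -
  have "norm (chan w $ i) * norm c * norm (chan w $ j) \<le> 1 * norm c * 1"
    by (intro mult_mono norm_chan_le_1) auto
  then show ?thesis
    by (simp add: norm_mult)
qed

lemma norm_herm_form_chan_le: "norm (herm_form Q (chan w)) \<le> (\<Sum>i\<in>UNIV. \<Sum>j\<in>UNIV. norm (Q $ i $ j))"
  unfolding herm_form_def
  by (intro order.trans[OF norm_sum] sum_mono order.trans[OF norm_sum] norm_chan_term_le)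

lemma Re_herm_form_chan_le: "Re (herm_form Q (chan w)) \<le> (\<Sum>i\<in>UNIV. \<Sum>j\<in>UNIV. norm (Q $ i $ j))"
  by (rule order.trans[OF complex_Re_le_cmod norm_herm_form_chan_le])

lemma Re_herm_form_mat_chan: "Re (herm_form (mat (of_real P)) (chan w)) = num_unblocked w * P"
  unfolding herm_form_mat cnj_chan_mult_chan by (simp add: num_unblocked_def Re_sum mult.commute)

lemma integral_chan_cross_term:
  assumes "i \<noteq> j" and "0 \<le> P"
  shows "(\<integral>w. cnj (chan w $ i) * c * chan w $ j / of_real (1 + num_unblocked w * P) \<partial>chan_space pB) = 0"
proof -
  define F where "F w = cnj (chan w $ i) * c * of_real (beta w j) / of_real (1 + num_unblocked w * P)"
    for w :: "'a \<Rightarrow> bool \<times> real"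
  have "norm (F w) \<le> norm c" for w
  proof -
    have "norm (F w) \<le> norm (cnj (chan w $ i) * c * of_real (beta w j))"
      unfolding F_def using num_unblocked_mult_nonneg[OF assms(2)] by (intro norm_divide_of_real_le) simp
    also have "\<dots> \<le> 1 * norm c * 1"
      unfolding norm_mult by (intro mult_mono) (auto simp: beta_def norm_chan_le_1)
    finally show ?thesis
      by simp
  qed
  moreover have "F (w(j := (fst (w j), t))) = F w" for w t
    using assms(1) by (simp add: F_def chan_phase_update beta_phase_update num_unblocked_phase_update)
  ultimately have "(\<integral>w. F w * cis (snd (w j)) \<partial>chan_space pB) = 0"
    by (intro integral_chan_space_phase) (auto simp: F_def)
  then show ?thesis
    by (simp add: F_def chan_nth[of _ j] mult.assoc mult.left_commute)
qed

lemma integral_herm_form_chan: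
  fixes Q :: "complex^'n::finite^'n"
  assumes "0 \<le> P"
  shows "(\<integral>w. herm_form Q (chan w) / of_real (1 + num_unblocked w * P) \<partial>chan_space pB)
       = (\<Sum>i\<in>UNIV. Q $ i $ i * of_real (\<integral>w. beta w i / (1 + num_unblocked w * P) \<partial>chan_space pB))"
proof -
  let ?D = "\<lambda>w. of_real (1 + num_unblocked w * P) :: complex"
  have integrable_term:
    "integrable (chan_space pB) (\<lambda>w. cnj (chan w $ i) * Q $ i $ j * chan w $ j / ?D w)" for i j
    using num_unblocked_mult_nonneg[OF assms]
    by (intro integrable_chan_space_bounded[where B="norm (Q $ i $ j)"]
        order.trans[OF norm_divide_of_real_le] norm_chan_term_le) auto
  have diagonal: "cnj (chan w $ i) * Q $ i $ i * chan w $ i / ?D w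
      = Q $ i $ i * of_real (beta w i / (1 + num_unblocked w * P))" for w i
    unfolding of_real_divide cnj_chan_mult_chan[symmetric] by (simp add: ac_simps)
  have "(\<integral>w. herm_form Q (chan w) / ?D w \<partial>chan_space pB)
      = (\<Sum>i\<in>UNIV. \<Sum>j\<in>UNIV. \<integral>w. cnj (chan w $ i) * Q $ i $ j * chan w $ j / ?D w \<partial>chan_space pB)"
    by (simp add: herm_form_def sum_divide_distrib integrable_term del: of_real_add of_real_mult)
  also have "\<dots> = (\<Sum>i\<in>UNIV. \<integral>w. cnj (chan w $ i) * Q $ i $ i * chan w $ i / ?D w \<partial>chan_space pB)"
  proof (intro sum.cong refl)
    fix i :: 'n
    show "(\<Sum>j\<in>UNIV. \<integral>w. cnj (chan w $ i) * Q $ i $ j * chan w $ j / ?D w \<partial>chan_space pB)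
        = (\<integral>w. cnj (chan w $ i) * Q $ i $ i * chan w $ i / ?D w \<partial>chan_space pB)"
      using integral_chan_cross_term[OF _ assms, of i]
      by (simp add: sum.remove[of UNIV i] del: of_real_add of_real_mult)
  qed
  also have "\<dots> = (\<Sum>i\<in>UNIV. Q $ i $ i * of_real (\<integral>w. beta w i / (1 + num_unblocked w * P) \<partial>chan_space pB))"
    by (simp only: diagonal integral_mult_right_zero integral_complex_of_real)
  finally show ?thesis .
qed

lemma integral_herm_form_chan_le:
  fixes Q :: "complex^'n::finite^'n"
  assumes diag: "\<forall>l. Re (Q $ l $ l) \<le> P" and "0 \<le> P"
  shows "(\<integral>w. Re (herm_form Q (chan w)) / (1 + num_unblocked w * P) \<partial>chan_space pB)
       \<le> (\<integral>w. num_unblocked w * P / (1 + num_unblocked w * P) \<partial>(chan_space pB :: ('n \<Rightarrow> bool \<times> real) measure))"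
proof -
  let ?M = "chan_space pB :: ('n \<Rightarrow> bool \<times> real) measure"
  let ?D = "\<lambda>w. 1 + num_unblocked w * P"
  interpret prob_space ?M
    by (rule prob_space_chan_space)
  have D_ge_1: "1 \<le> ?D w" for w
    using num_unblocked_mult_nonneg[OF \<open>0 \<le> P\<close>] by simp
  have integrable_herm_form: "integrable ?M (\<lambda>w. herm_form Q (chan w) / of_real (?D w))"
    using D_ge_1
    by (intro integrable_chan_space_bounded[where B="\<Sum>i\<in>UNIV. \<Sum>j\<in>UNIV. norm (Q $ i $ j)"]
        order.trans[OF norm_divide_of_real_le] norm_herm_form_chan_le) auto
  have integrable_beta: "integrable ?M (\<lambda>w. beta w i / ?D w)" for i
    using num_unblocked_mult_nonneg[OF \<open>0 \<le> P\<close>]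
    by (intro integrable_divide_one_plus[where K=1]) (auto simp: beta_nonneg beta_le_1)
  have "(\<integral>w. Re (herm_form Q (chan w)) / ?D w \<partial>?M)
      = Re (\<integral>w. herm_form Q (chan w) / of_real (?D w) \<partial>?M)"
    unfolding Re_divide_of_real[symmetric]
    by (rule integral_bounded_linear[OF bounded_linear_Re integrable_herm_form])
  also have "\<dots> = (\<Sum>i\<in>UNIV. Re (Q $ i $ i) * (\<integral>w. beta w i / ?D w \<partial>?M))"
    unfolding integral_herm_form_chan[OF \<open>0 \<le> P\<close>] by (simp add: Re_sum)
  also have "\<dots> \<le> (\<Sum>i\<in>UNIV. P * (\<integral>w. beta w i / ?D w \<partial>?M))"
    by (intro sum_mono mult_right_mono Bochner_Integration.integral_nonneg divide_nonneg_nonneg)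
      (use diag order.trans[OF zero_le_one D_ge_1] in \<open>auto intro: beta_nonneg\<close>)
  also have "\<dots> = (\<integral>w. (\<Sum>i\<in>UNIV. P * (beta w i / ?D w)) \<partial>?M)"
    by (simp add: integrable_beta del: times_divide_eq_right)
  also have "\<dots> = (\<integral>w. num_unblocked w * P / ?D w \<partial>?M)"
    unfolding sum_distrib_left[symmetric] sum_divide_distrib[symmetric] num_unblocked_def
    by (simp add: mult.commute)
  finally show ?thesis .
qed

lemma integral_one_plus_herm_form_chan_divide_le_1:
  fixes Q :: "complex^'n::finite^'n"
  assumes "herm_psd Q" and "\<forall>l. Re (Q $ l $ l) \<le> P" and "0 \<le> P"
  shows "(\<integral>w. (1 + Re (herm_form Q (chan w))) / (1 + num_unblocked w * P)
           \<partial>(chan_space pB :: ('n \<Rightarrow> bool \<times> real) measure)) \<le> 1"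
proof -
  let ?M = "chan_space pB :: ('n \<Rightarrow> bool \<times> real) measure"
  let ?X = "\<lambda>w. Re (herm_form Q (chan w))" and ?Y = "\<lambda>w :: 'n \<Rightarrow> bool \<times> real. num_unblocked w * P"
  interpret prob_space ?M
    by (rule prob_space_chan_space)
  have X_bounds: "0 \<le> ?X w" "?X w \<le> (\<Sum>i\<in>UNIV. \<Sum>j\<in>UNIV. norm (Q $ i $ j))" for w
    using \<open>herm_psd Q\<close> Re_herm_form_chan_le by (auto simp: herm_psd_def)
  have Y_bounds: "0 \<le> ?Y w" "?Y w \<le> real CARD('n) * P" for w
    using num_unblocked_mult_nonneg num_unblocked_mult_le \<open>0 \<le> P\<close> by auto
  have integrable_ratio: "integrable ?M (\<lambda>w. Z w / (1 + ?Y w))"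
    if "Z \<in> borel_measurable ?M" "\<And>w. 0 \<le> Z w" "\<And>w. Z w \<le> K" for Z K
    using that Y_bounds(1) by (intro integrable_divide_one_plus) auto
  have "(\<integral>w. (1 + ?X w) / (1 + ?Y w) \<partial>?M)
      = (\<integral>w. 1 / (1 + ?Y w) \<partial>?M) + (\<integral>w. ?X w / (1 + ?Y w) \<partial>?M)"
    unfolding add_divide_distrib
    by (intro Bochner_Integration.integral_add integrable_ratio) (use X_bounds in auto)
  also have "\<dots> \<le> (\<integral>w. 1 / (1 + ?Y w) \<partial>?M) + (\<integral>w. ?Y w / (1 + ?Y w) \<partial>?M)"
    using integral_herm_form_chan_le[OF assms(2,3)] by simp
  also have "\<dots> = (\<integral>w. (1 + ?Y w) / (1 + ?Y w) \<partial>?M)"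
    unfolding add_divide_distrib
    by (intro Bochner_Integration.integral_add[symmetric] integrable_ratio) (use Y_bounds in auto)
  also have "\<dots> = 1"
    using Y_bounds(1) by (simp add: prob_space add_nonneg_eq_0_iff)
  finally show ?thesis .
qed

lemma integral_log_herm_form_chan_le:
  fixes Q :: "complex^'n::finite^'n"
  assumes "herm_psd Q" and "\<forall>l. Re (Q $ l $ l) \<le> P" and "0 \<le> P" and "1 < b"
  shows "(\<integral>w. log b (1 + Re (herm_form Q (chan w))) \<partial>chan_space pB)
       \<le> (\<integral>w. log b (1 + num_unblocked w * P) \<partial>(chan_space pB :: ('n \<Rightarrow> bool \<times> real) measure))"
proof -
  let ?M = "chan_space pB :: ('n \<Rightarrow> bool \<times> real) measure"
  let ?X = "\<lambda>w. Re (herm_form Q (chan w))" and ?Y = "\<lambda>w :: 'n \<Rightarrow> bool \<times> real. num_unblocked w * P"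
  interpret prob_space ?M
    by (rule prob_space_chan_space)
  have X_bounds: "0 \<le> ?X w" "?X w \<le> (\<Sum>i\<in>UNIV. \<Sum>j\<in>UNIV. norm (Q $ i $ j))" for w
    using \<open>herm_psd Q\<close> Re_herm_form_chan_le by (auto simp: herm_psd_def)
  have Y_bounds: "0 \<le> ?Y w" "?Y w \<le> real CARD('n) * P" for w
    using num_unblocked_mult_nonneg num_unblocked_mult_le \<open>0 \<le> P\<close> by auto
  show ?thesis
  proof (rule integral_log_le_of_integral_divide_le_1[OF \<open>1 < b\<close>])
    show "0 < 1 + ?X w" "0 < 1 + ?Y w" for w
      using X_bounds(1)[of w] Y_bounds(1)[of w] by simp_all
    show "integrable ?M (\<lambda>w. log b (1 + ?X w))" "integrable ?M (\<lambda>w. log b (1 + ?Y w))"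
      using X_bounds Y_bounds \<open>1 < b\<close> by (auto intro!: integrable_log_one_plus)
    show "integrable ?M (\<lambda>w. (1 + ?X w) / (1 + ?Y w))"
      using X_bounds Y_bounds
      by (intro integrable_divide_one_plus[where K="1 + (\<Sum>i\<in>UNIV. \<Sum>j\<in>UNIV. norm (Q $ i $ j))"]) auto
    show "(\<integral>w. (1 + ?X w) / (1 + ?Y w) \<partial>?M) \<le> 1"
      by (rule integral_one_plus_herm_form_chan_divide_le_1[OF assms(1-3)])
  qed
qed

theorem corollary1:
  fixes P pB b :: real
  assumes "0 \<le> P" and "0 \<le> pB" and "pB \<le> 1" and "1 < b"
  shows "(SUP Q\<in>{Q :: complex^'n::finite^'n. herm_psd Q \<and> (\<forall>l. Re (Q $ l $ l) \<le> P)}.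
            \<integral>\<omega>. log b (1 + Re (herm_form Q (chan \<omega>))) \<partial>(chan_space pB :: ('n \<Rightarrow> bool \<times> real) measure))
         = (\<integral>\<omega>. log b (1 + num_unblocked \<omega> * P) \<partial>(chan_space pB :: ('n \<Rightarrow> bool \<times> real) measure))"
proof (rule cSup_eq_maximum[OF image_eqI[where x="mat (of_real P)"]])
qed (auto simp: Re_herm_form_mat_chan herm_psd_mat mat_nth_diagonal assms
    intro!: integral_log_herm_form_chan_le)

end
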